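(* Let $r\ge2$ and $n\ge2$. For $0<b<r^n$, the lattice point of the half-open parallelepiped of $\mathcal{B}_{(r,n)}$ indexed by $b$ lies in the open parallelepiped if and only if $r\nmid b$. Consequently \[ \ell^\ast(\mathcal{B}_{(r,n)};z)=h^\ast(\mathcal{B}_{(r,n)};z)-h^\ast(\mathcal{B}_{(r,n-1)};z). \]
   Context: For $r\ge2$, $n\ge1$, let $q^{(r,n)}:=((r-1),(r-1)r,\ldots,(r-1)r^{n-1})$ and $\mathcal{B}_{(r,n)}:=\operatorname{conv}\bigl(e^{(1)},\ldots,e^{(n)},-\sum_{i=1}^n(r-1)r^{i-1}e^{(i)}\bigr)\subset\mathbb{R}^n$ (the base-$r$ $n$-simplex; its normalized volume is $r^n$). Ordering its vertices as $v^{(0)}=-\sum_i (r-1)r^{i-1}e^{(i)}$, $v^{(i)}=e^{(i)}$, the lattice points of the half-open parallelepiped $\{\sum_{i=0}^n\lambda_i(v^{(i)},1):0\le\lambda_i<1\}$ are in bijection with $0\le b<r^n$ via $\lambda_0=b/r^n$. For a lattice simplex $\Delta=\operatorname{conv}(v^{(0)},\ldots,v^{(d)})$, $\ell^\ast(\Delta;z):=\sum_{x\in\Pi^\circ_\Delta\cap\mathbb{Z}^{n+1}}z^{x_{n+1}}$ with $\Pi^\circ_\Delta:=\{\sum\lambda_i(v^{(i)},1):0<\lambda_i<1\}$, and $h^\ast(P;z)$ is the numerator of the Ehrhart series $\sum_{t\ge0}|tP\cap\mathbb{Z}^n|z^t=h^\ast(P;z)/(1-z)^{\dim P+1}$. 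*)

theory Defs
  imports Complex_Main "HOL-Computational_Algebra.Formal_Power_Series"
begin

(* Points of R^m are represented as functions nat => real, coordinate j (0-based)
   for j < m, all other coordinates 0.  A lattice simplex with d+1 vertices in R^n
   is given by V :: nat => (nat => real), vertices V 0, ..., V d. *)

(* Vertices of the base-r n-simplex B_(r,n):
   vertex 0 = - sum_i (r-1) r^(i-1) e^(i), vertex i = e^(i) (1 <= i <= n);
   e^(i) has its 1 in (0-based) coordinate i-1. *)
definition base_vert :: "nat \<Rightarrow> nat \<Rightarrow> nat \<Rightarrow> nat \<Rightarrow> real" where
  "base_vert r n i j =
     (if i = 0 then (if j < n then - ((real r - 1) * real r ^ j) else 0)
      else (if i \<le> n \<and> j = i - 1 then 1 else 0))"

(* (v,1) in R^(n+1): the extra coordinate is coordinate n *)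
definition lift_pt :: "nat \<Rightarrow> (nat \<Rightarrow> real) \<Rightarrow> nat \<Rightarrow> real" where
  "lift_pt n v = v(n := 1)"

definition par_point :: "nat \<Rightarrow> nat \<Rightarrow> (nat \<Rightarrow> nat \<Rightarrow> real) \<Rightarrow> (nat \<Rightarrow> real) \<Rightarrow> nat \<Rightarrow> real" where
  "par_point n d V lam = (\<lambda>j. \<Sum>i\<le>d. lam i * lift_pt n (V i) j)"

definition is_lattice_pt :: "(nat \<Rightarrow> real) \<Rightarrow> bool" where
  "is_lattice_pt x \<longleftrightarrow> (\<forall>j. x j \<in> \<int>)"

definition open_par :: "nat \<Rightarrow> nat \<Rightarrow> (nat \<Rightarrow> nat \<Rightarrow> real) \<Rightarrow> (nat \<Rightarrow> real) set" where
  "open_par n d V = {par_point n d V lam | lam. \<forall>i\<le>d. 0 < lam i \<and> lam i < 1}"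

definition lstar :: "nat \<Rightarrow> nat \<Rightarrow> (nat \<Rightarrow> nat \<Rightarrow> real) \<Rightarrow> int fps" where
  "lstar n d V = Abs_fps (\<lambda>k. int (card {x \<in> open_par n d V. is_lattice_pt x \<and> x n = real k}))"

definition ehrhart_count :: "nat \<Rightarrow> nat \<Rightarrow> (nat \<Rightarrow> nat \<Rightarrow> real) \<Rightarrow> nat \<Rightarrow> nat" where
  "ehrhart_count n d V t = card {x :: nat \<Rightarrow> int. (\<forall>j\<ge>n. x j = 0) \<and>
      (\<exists>mu :: nat \<Rightarrow> real. (\<forall>i\<le>d. 0 \<le> mu i) \<and> (\<Sum>i\<le>d. mu i) = real t \<and>
          (\<forall>j<n. real_of_int (x j) = (\<Sum>i\<le>d. mu i * V i j)))}"

(* h^*-polynomial of a d-dimensional lattice simplex conv(V 0..V d) (dim P = d):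
   the numerator  (sum_t |tP \<inter> Z^n| z^t) * (1 - z)^(d+1), as a formal power series *)
definition h_star :: "nat \<Rightarrow> nat \<Rightarrow> (nat \<Rightarrow> nat \<Rightarrow> real) \<Rightarrow> int fps" where
  "h_star n d V = Abs_fps (\<lambda>t. int (ehrhart_count n d V t)) * (1 - fps_X) ^ (d + 1)"

definition base_hp_points :: "nat \<Rightarrow> nat \<Rightarrow> nat \<Rightarrow> (nat \<Rightarrow> real) set" where
  "base_hp_points r n b = {y. is_lattice_pt y \<and>
     (\<exists>lam. lam 0 = real b / real r ^ n \<and> (\<forall>i\<le>n. 0 \<le> lam i \<and> lam i < 1) \<and>
            y = par_point n n (base_vert r n) lam)}"

end

theory Submission
  imports Defs
begin

(* Write b (r - 1) r^j = q_j r^n + s_j with 0 <= s_j < r^n. The lattice point of the half-open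
   parallelepiped with lambda_0 = b / r^n is forced to have lambda_(j+1) = s_j / r^n, coordinates
   -q_j and height b - sum q_j. It is interior iff b > 0 and no s_j vanishes; since r and r - 1 are
   coprime, some s_j vanishes exactly when r divides b. Every lattice point of the cone over the
   simplex is uniquely such a point plus a nonnegative integer combination of the generators
   (v_i, 1), so h* = sum_b z^height(b), while l* is the same sum restricted to r not dividing b.
   Finally b |-> r b preserves heights and maps the data of B_(r,n-1) onto the multiples of r,
   which therefore contribute exactly h*(B_(r,n-1)). *)

lemma sum_pred_times_power:
  fixes x :: "'a::comm_ring_1"
  shows "(\<Sum>j<n. (x - 1) * x ^ j) = x ^ n - 1"
  by (simp add: power_diff_1_eq sum_distrib_left)

lemma base_vert_combination:
  assumes "j < n"
  shows "(\<Sum>i\<le>n. mu i * base_vert r n i j) = mu (Suc j) - mu 0 * ((real r - 1) * real r ^ j)"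
proof -
  have "(\<Sum>i<n. mu (Suc i) * base_vert r n (Suc i) j) = (\<Sum>i<n. if i = j then mu (Suc j) else 0)"
    by (rule sum.cong) (auto simp: base_vert_def)
  with assms show ?thesis
    by (simp add: sum.atMost_shift base_vert_def)
qed

lemma base_vert_combination_beyond:
  "n \<le> j \<Longrightarrow> (\<Sum>i\<le>n. mu i * base_vert r n i j) = 0"
  by (intro sum.neutral) (auto simp: base_vert_def)

text \<open>The linear functional \<open>(x, s) \<mapsto> s - \<Sum>j<n. x j\<close> vanishes on the generators
  \<open>(v\<^sup>(\<^sup>i\<^sup>), 1)\<close>, \<open>i \<ge> 1\<close>, and takes the value \<open>r ^ n\<close> on \<open>(v\<^sup>(\<^sup>0\<^sup>), 1)\<close>.\<close>
lemma base_vert_weight: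
  "(\<Sum>i\<le>n. mu i) - (\<Sum>j<n. \<Sum>i\<le>n. mu i * base_vert r n i j) = mu 0 * real r ^ n"
proof -
  have "(\<Sum>j<n. \<Sum>i\<le>n. mu i * base_vert r n i j)
      = (\<Sum>j<n. mu (Suc j) - mu 0 * ((real r - 1) * real r ^ j))"
    by (simp add: base_vert_combination)
  also have "\<dots> = (\<Sum>j<n. mu (Suc j)) - mu 0 * (real r ^ n - 1)"
    by (simp add: sum_subtractf flip: sum_distrib_left sum_pred_times_power)
  finally show ?thesis
    by (simp add: sum.atMost_shift algebra_simps)
qed

lemma par_point_base_vert:
  "par_point n n (base_vert r n) lam j =
     (if j < n then lam (Suc j) - lam 0 * ((real r - 1) * real r ^ j)
      else if j = n then (\<Sum>i\<le>n. lam i) else 0)"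
  by (simp add: par_point_def lift_pt_def base_vert_combination base_vert_combination_beyond)

lemma par_point_base_vert_weight:
  "par_point n n (base_vert r n) lam n - (\<Sum>j<n. par_point n n (base_vert r n) lam j)
     = lam 0 * real r ^ n"
  using base_vert_weight[where mu = lam] by (simp add: par_point_def lift_pt_def)

text \<open>The lattice point of the half-open parallelepiped with \<open>\<lambda>\<^sub>0 = b / r ^ n\<close>: writing
  \<open>b (r - 1) r ^ j = q\<^sub>j r ^ n + s\<^sub>j\<close> with \<open>0 \<le> s\<^sub>j < r ^ n\<close>, integrality of coordinate \<open>j\<close>
  forces \<open>\<lambda>\<^sub>j\<^sub>+\<^sub>1 = s\<^sub>j / r ^ n\<close>, and that coordinate is then \<open>-q\<^sub>j\<close>.\<close>
definition box_quot :: "nat \<Rightarrow> nat \<Rightarrow> nat \<Rightarrow> nat \<Rightarrow> nat" where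
  "box_quot r n b j = b * (r - 1) * r ^ j div r ^ n"

definition box_rem :: "nat \<Rightarrow> nat \<Rightarrow> nat \<Rightarrow> nat \<Rightarrow> nat" where
  "box_rem r n b j = b * (r - 1) * r ^ j mod r ^ n"

definition box_coeff :: "nat \<Rightarrow> nat \<Rightarrow> nat \<Rightarrow> nat \<Rightarrow> real" where
  "box_coeff r n b i =
     (if i = 0 then real b / real r ^ n else real (box_rem r n b (i - 1)) / real r ^ n)"

definition box_point :: "nat \<Rightarrow> nat \<Rightarrow> nat \<Rightarrow> nat \<Rightarrow> real" where
  "box_point r n b = par_point n n (base_vert r n) (box_coeff r n b)"

lemma box_quot_rem:
  fixes r :: nat
  assumes "1 \<le> r"
  shows "of_nat b * (of_nat r - 1) * of_nat r ^ j
           = (of_nat (box_quot r n b j) * of_nat r ^ n + of_nat (box_rem r n b j) :: 'a::comm_ring_1)"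
proof -
  have "b * (r - 1) * r ^ j = box_quot r n b j * r ^ n + box_rem r n b j"
    unfolding box_quot_def box_rem_def by (rule div_mult_mod_eq[symmetric])
  then have "(of_nat (b * (r - 1) * r ^ j) :: 'a) = of_nat (box_quot r n b j * r ^ n + box_rem r n b j)"
    by (rule arg_cong)
  with assms show ?thesis
    by (simp add: of_nat_diff)
qed

lemma box_rem_less: "1 \<le> r \<Longrightarrow> box_rem r n b j < r ^ n"
  by (simp add: box_rem_def)

lemma box_coeff_bounds:
  assumes "1 \<le> r" "b < r ^ n"
  shows "0 \<le> box_coeff r n b i \<and> box_coeff r n b i < 1"
proof -
  have "real b < real r ^ n" "real (box_rem r n b (i - 1)) < real r ^ n" "0 < real r ^ n"
    using assms box_rem_less[OF assms(1)] by (simp_all flip: of_nat_power)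
  then show ?thesis
    by (simp add: box_coeff_def del: of_nat_power)
qed

lemma box_point_coord:
  assumes "1 \<le> r" "j < n"
  shows "box_point r n b j = - real (box_quot r n b j)"
  using assms box_quot_rem[OF assms(1), of b j n, where 'a = real]
  by (simp add: box_point_def par_point_base_vert box_coeff_def field_simps)

lemma box_point_beyond: "n < j \<Longrightarrow> box_point r n b j = 0"
  by (simp add: box_point_def par_point_base_vert)

lemma box_point_weight:
  assumes "1 \<le> r"
  shows "box_point r n b n - (\<Sum>j<n. box_point r n b j) = real b"
  using par_point_base_vert_weight[of n r "box_coeff r n b"] assms
  by (simp add: box_point_def box_coeff_def)

lemma box_quot_sum_le:
  assumes "1 \<le> r"
  shows "(\<Sum>j<n. box_quot r n b j) \<le> b"
proof -
  have "0 \<le> (\<Sum>i\<le>n. box_coeff r n b i)"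
    by (intro sum_nonneg) (simp add: box_coeff_def)
  also have "\<dots> = box_point r n b n"
    by (simp add: box_point_def par_point_base_vert)
  also have "\<dots> = real b - real (\<Sum>j<n. box_quot r n b j)"
    using box_point_weight[OF assms, of n b] box_point_coord[OF assms] by (simp add: sum_negf)
  finally show ?thesis
    by linarith
qed

text \<open>The subtraction does not truncate, by \<open>box_quot_sum_le\<close>.\<close>
definition box_height :: "nat \<Rightarrow> nat \<Rightarrow> nat \<Rightarrow> nat" where
  "box_height r n b = b - (\<Sum>j<n. box_quot r n b j)"

lemma box_point_height:
  assumes "1 \<le> r"
  shows "box_point r n b n = real (box_height r n b)"
  using box_point_weight[OF assms, of n b] box_point_coord[OF assms] box_quot_sum_le[OF assms, of n b]
  by (simp add: box_height_def of_nat_diff sum_negf)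

lemma box_point_lattice:
  assumes "1 \<le> r"
  shows "is_lattice_pt (box_point r n b)"
  unfolding is_lattice_pt_def
proof
  fix j
  show "box_point r n b j \<in> \<int>"
    using box_point_coord[OF assms, of j n b] box_point_height[OF assms, of n b]
      box_point_beyond[of n j r b]
    by (cases j n rule: linorder_cases) auto
qed

lemma half_open_coeff_unique:
  assumes r: "1 \<le> r"
    and lam0: "lam 0 = real b / real r ^ n"
    and bounds: "\<forall>i\<le>n. 0 \<le> lam i \<and> lam i < 1"
    and lattice: "is_lattice_pt (par_point n n (base_vert r n) lam)"
    and i: "i \<le> n"
  shows "lam i = box_coeff r n b i"
proof (cases i)
  case 0
  then show ?thesis
    using lam0 by (simp add: box_coeff_def)
next
  case (Suc j)
  let ?s = "real (box_rem r n b j) / real r ^ n"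
  have j: "j < n"
    using i Suc by simp
  have pos: "0 < real r ^ n"
    using r by simp
  have "lam 0 * ((real r - 1) * real r ^ j) = real b * (real r - 1) * real r ^ j / real r ^ n"
    using lam0 by simp
  also have "\<dots> = (real (box_quot r n b j) * real r ^ n + real (box_rem r n b j)) / real r ^ n"
    by (simp only: box_quot_rem[OF r, of b j n, where 'a = real])
  also have "\<dots> = real (box_quot r n b j) + ?s"
    using pos by (simp add: field_simps)
  finally have "par_point n n (base_vert r n) lam j + real (box_quot r n b j) = lam (Suc j) - ?s"
    using j by (simp add: par_point_base_vert)
  moreover have "par_point n n (base_vert r n) lam j + real (box_quot r n b j) \<in> \<int>"
    using lattice by (simp add: is_lattice_pt_def)
  ultimately have int: "lam (Suc j) - ?s \<in> \<int>"
    by simp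
  have "real (box_rem r n b j) < real r ^ n"
    using box_rem_less[OF r] by (simp flip: of_nat_power)
  then have "0 \<le> ?s" "?s < 1"
    using pos by simp_all
  moreover have "0 \<le> lam (Suc j)" "lam (Suc j) < 1"
    using bounds j by auto
  ultimately have "\<bar>lam (Suc j) - ?s\<bar> < 1"
    by linarith
  with int have "lam (Suc j) - ?s = 0"
    by (rule Ints_nonzero_abs_less1)
  then show ?thesis
    using Suc by (simp add: box_coeff_def)
qed

lemma par_point_eq_box_point:
  assumes "1 \<le> r"
    and "lam 0 = real b / real r ^ n"
    and "\<forall>i\<le>n. 0 \<le> lam i \<and> lam i < 1"
    and "is_lattice_pt (par_point n n (base_vert r n) lam)"
  shows "par_point n n (base_vert r n) lam = box_point r n b"
  unfolding box_point_def par_point_def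
  using half_open_coeff_unique[OF assms] by (intro ext sum.cong) auto

lemma base_hp_points_eq:
  assumes "1 \<le> r" "b < r ^ n"
  shows "base_hp_points r n b = {box_point r n b}"
proof -
  have "box_coeff r n b 0 = real b / real r ^ n"
    by (simp add: box_coeff_def)
  then have "box_point r n b \<in> base_hp_points r n b"
    unfolding base_hp_points_def
    using box_coeff_bounds[OF assms] box_point_lattice[OF assms(1), of n b]
    by (auto simp: box_point_def)
  moreover have "y = box_point r n b" if "y \<in> base_hp_points r n b" for y
    using that par_point_eq_box_point[OF assms(1)] by (auto simp: base_hp_points_def)
  ultimately show ?thesis
    by blast
qed

text \<open>Any lattice point of the half-open parallelepiped is some \<open>box_point r n b\<close>: the weight
  \<open>\<lambda>\<^sub>0 r ^ n\<close> is an integer in \<open>[0, r ^ n)\<close>.\<close>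
lemma half_open_lattice_point:
  assumes r: "1 \<le> r"
    and bounds: "\<forall>i\<le>n. 0 \<le> lam i \<and> lam i < 1"
    and lattice: "is_lattice_pt (par_point n n (base_vert r n) lam)"
  obtains b where "b < r ^ n" "lam 0 = real b / real r ^ n"
    "par_point n n (base_vert r n) lam = box_point r n b"
proof -
  let ?y = "par_point n n (base_vert r n) lam"
  have pos: "0 < real r ^ n"
    using r by simp
  have "?y n - (\<Sum>j<n. ?y j) \<in> \<int>"
    using lattice unfolding is_lattice_pt_def by (intro Ints_diff Ints_sum) auto
  then obtain z where "?y n - (\<Sum>j<n. ?y j) = real_of_int z"
    by (rule Ints_cases)
  then have z: "lam 0 * real r ^ n = real_of_int z"
    by (simp only: par_point_base_vert_weight)
  have "0 \<le> lam 0" "lam 0 < 1"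
    using bounds by auto
  then have "0 \<le> real_of_int z" and z_less: "real_of_int z < real r ^ n"
    using pos by (simp_all flip: z)
  then have "0 \<le> z"
    by simp
  with z_less have bound: "nat z < r ^ n"
    by (metis nat_less_iff of_int_less_iff of_int_of_nat_eq of_nat_power)
  have l0: "lam 0 = real (nat z) / real r ^ n"
    using z pos \<open>0 \<le> z\<close> by (simp add: field_simps)
  show thesis
    by (rule that[OF bound l0 par_point_eq_box_point[OF r l0 bounds lattice]])
qed

lemma box_point_in_open_par_iff:
  assumes r: "1 \<le> r" and b: "b < r ^ n"
  shows "box_point r n b \<in> open_par n n (base_vert r n) \<longleftrightarrow> (\<forall>i\<le>n. 0 < box_coeff r n b i)"
proof
  assume "box_point r n b \<in> open_par n n (base_vert r n)"
  then obtain lam where bounds: "\<forall>i\<le>n. 0 < lam i \<and> lam i < 1"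
    and eq: "box_point r n b = par_point n n (base_vert r n) lam"
    unfolding open_par_def by blast
  have "lam 0 * real r ^ n = real b"
    using par_point_base_vert_weight[of n r lam] box_point_weight[OF r, of n b] by (simp flip: eq)
  then have "lam 0 = real b / real r ^ n"
    using r by (simp add: field_simps)
  moreover have "is_lattice_pt (par_point n n (base_vert r n) lam)"
    using box_point_lattice[OF r] by (simp flip: eq)
  ultimately show "\<forall>i\<le>n. 0 < box_coeff r n b i"
    using half_open_coeff_unique[OF r] bounds by (metis less_imp_le)
next
  assume "\<forall>i\<le>n. 0 < box_coeff r n b i"
  with box_coeff_bounds[OF r b] show "box_point r n b \<in> open_par n n (base_vert r n)"
    unfolding open_par_def box_point_def by blast
qed

text \<open>Since \<open>r\<close> and \<open>r - 1\<close> are coprime, \<open>r ^ n\<close> divides \<open>b (r - 1) r ^ j\<close> iff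
  \<open>r ^ (n - j)\<close> divides \<open>b\<close>; for some \<open>j < n\<close> this just says \<open>r\<close> divides \<open>b\<close>.\<close>
lemma box_rem_eq_zero_iff:
  assumes r: "1 \<le> r" and n: "1 \<le> n"
  shows "(\<exists>j<n. box_rem r n b j = 0) \<longleftrightarrow> r dvd b"
proof
  assume "\<exists>j<n. box_rem r n b j = 0"
  then obtain j where j: "j < n" and "r ^ (n - j) * r ^ j dvd b * (r - 1) * r ^ j"
    unfolding box_rem_def by (auto simp flip: power_add)
  then have "r ^ (n - j) dvd b * (r - 1)"
    using r by simp
  then have "r dvd b * (r - 1)"
    using j by (meson dvd_power dvd_trans zero_less_diff)
  moreover have "coprime r (r - 1)"
    using r by (cases r) (simp_all add: coprime_Suc_left_nat)
  ultimately show "r dvd b"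
    by (simp add: coprime_dvd_mult_left_iff)
next
  assume "r dvd b"
  then obtain c where "b = r * c" ..
  then have "b * (r - 1) * r ^ (n - 1) = (r * r ^ (n - 1)) * (c * (r - 1))"
    by (simp add: mult_ac)
  also have "r * r ^ (n - 1) = r ^ n"
    using n by (simp flip: power_Suc)
  finally have eq: "b * (r - 1) * r ^ (n - 1) = r ^ n * (c * (r - 1))" .
  have "box_rem r n b (n - 1) = 0"
    unfolding box_rem_def eq by simp
  with n show "\<exists>j<n. box_rem r n b j = 0"
    by (intro exI[of _ "n - 1"]) auto
qed

lemma box_point_in_open_par_iff_not_dvd:
  assumes r: "1 \<le> r" and n: "1 \<le> n" and b: "b < r ^ n"
  shows "box_point r n b \<in> open_par n n (base_vert r n) \<longleftrightarrow> \<not> r dvd b"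
proof -
  have "(\<forall>i\<le>n. 0 < box_coeff r n b i) \<longleftrightarrow>
        0 < box_coeff r n b 0 \<and> (\<forall>j<n. 0 < box_coeff r n b (Suc j))"
    by (metis Suc_le_eq le0 not0_implies_Suc)
  also have "\<dots> \<longleftrightarrow> 0 < b \<and> (\<forall>j<n. box_rem r n b j \<noteq> 0)"
    using r by (simp add: box_coeff_def zero_less_divide_iff)
  finally show ?thesis
    using box_point_in_open_par_iff[OF r b] box_rem_eq_zero_iff[OF r n, of b]
    by (metis dvd_0_right gr0I)
qed

lemma inj_box_point:
  assumes "1 \<le> r"
  shows "inj (box_point r n)"
proof (rule injI)
  fix a b
  assume eq: "box_point r n a = box_point r n b"
  have "real a = box_point r n a n - (\<Sum>j<n. box_point r n a j)"
    by (simp add: box_point_weight[OF assms])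
  also have "\<dots> = real b"
    by (simp add: eq box_point_weight[OF assms])
  finally show "a = b"
    by simp
qed

lemma open_par_lattice_points_at_height:
  assumes r: "1 \<le> r" and n: "1 \<le> n"
  shows "{x \<in> open_par n n (base_vert r n). is_lattice_pt x \<and> x n = real k}
           = box_point r n ` {b. b < r ^ n \<and> \<not> r dvd b \<and> box_height r n b = k}"
    (is "?L = ?R")
proof
  show "?L \<subseteq> ?R"
  proof
    fix x
    assume x: "x \<in> ?L"
    then obtain lam where bounds: "\<forall>i\<le>n. 0 < lam i \<and> lam i < 1"
      and x_eq: "x = par_point n n (base_vert r n) lam"
      unfolding open_par_def by blast
    have "\<forall>i\<le>n. 0 \<le> lam i \<and> lam i < 1"
      using bounds by (simp add: less_imp_le)
    moreover have "is_lattice_pt (par_point n n (base_vert r n) lam)"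
      using x x_eq by simp
    ultimately obtain b where b: "b < r ^ n" and "par_point n n (base_vert r n) lam = box_point r n b"
      by (rule half_open_lattice_point[OF r])
    with x_eq have x_box: "x = box_point r n b"
      by simp
    have "\<not> r dvd b"
      using x x_box box_point_in_open_par_iff_not_dvd[OF r n b] by simp
    moreover have "box_height r n b = k"
      using x x_box box_point_height[OF r, of n b] by simp
    ultimately show "x \<in> ?R"
      using b x_box by blast
  qed
  show "?R \<subseteq> ?L"
  proof
    fix x
    assume "x \<in> ?R"
    then obtain b where b: "b < r ^ n" "\<not> r dvd b" "box_height r n b = k"
      and x: "x = box_point r n b"
      by blast
    show "x \<in> ?L"
      using box_point_in_open_par_iff_not_dvd[OF r n b(1)] box_point_lattice[OF r, of n b]
        box_point_height[OF r, of n b] b x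
      by simp
  qed
qed

lemma lstar_base_simplex_nth:
  assumes "1 \<le> r" "1 \<le> n"
  shows "fps_nth (lstar n n (base_vert r n)) k = int (card {b. b < r ^ n \<and> \<not> r dvd b \<and> box_height r n b = k})"
proof -
  have "inj_on (box_point r n) {b. b < r ^ n \<and> \<not> r dvd b \<and> box_height r n b = k}"
    using inj_box_point[OF assms(1)] by (rule inj_on_subset) simp
  then show ?thesis
    by (simp add: lstar_def open_par_lattice_points_at_height[OF assms] card_image)
qed

text \<open>For a point \<open>x\<close> of \<open>t \<B>\<^sub>(\<^sub>r\<^sub>,\<^sub>n\<^sub>)\<close> written as \<open>\<Sum>i. \<mu>\<^sub>i v\<^sup>(\<^sup>i\<^sup>)\<close> with \<open>\<Sum>i. \<mu>\<^sub>i = t\<close>,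
  the cone weight is \<open>\<mu>\<^sub>0 r ^ n\<close>.\<close>
definition cone_weight :: "nat \<Rightarrow> nat \<Rightarrow> (nat \<Rightarrow> int) \<Rightarrow> int" where
  "cone_weight n t x = int t - (\<Sum>j<n. x j)"

lemma dilated_base_simplex_constraints:
  fixes x :: "nat \<Rightarrow> int"
  assumes r: "1 \<le> r"
    and nonneg: "\<forall>i\<le>n. 0 \<le> mu i" and sum: "(\<Sum>i\<le>n. mu i) = real t"
    and coords: "\<forall>j<n. real_of_int (x j) = (\<Sum>i\<le>n. mu i * base_vert r n i j)"
  shows "0 \<le> cone_weight n t x \<and>
         (\<forall>j<n. 0 \<le> int r ^ n * x j + cone_weight n t x * (int r - 1) * int r ^ j)"
proof -
  let ?w = "cone_weight n t x"
  have pos: "0 < real r ^ n"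
    using r by simp
  have w: "real_of_int ?w = mu 0 * real r ^ n"
    using base_vert_weight[of mu n r] sum coords by (simp add: cone_weight_def)
  have "0 \<le> real_of_int ?w"
    using w nonneg pos by simp
  moreover have "0 \<le> real_of_int (int r ^ n * x j + ?w * (int r - 1) * int r ^ j)" if j: "j < n" for j
  proof -
    have xj: "real_of_int (x j) = mu (Suc j) - mu 0 * ((real r - 1) * real r ^ j)"
      using coords j by (simp add: base_vert_combination)
    have "real_of_int (int r ^ n * x j + ?w * (int r - 1) * int r ^ j)
        = real r ^ n * real_of_int (x j) + real_of_int ?w * (real r - 1) * real r ^ j"
      by simp
    also have "\<dots> = real r ^ n * mu (Suc j)"
      unfolding xj w by (simp add: algebra_simps)
    finally show ?thesis
      using nonneg j pos by simp
  qed
  ultimately show ?thesis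
    by (simp only: of_int_0_le_iff) blast
qed

lemma dilated_base_simplex_coeffs:
  fixes x :: "nat \<Rightarrow> int"
  assumes r: "1 \<le> r"
    and weight: "0 \<le> cone_weight n t x"
    and constraints: "\<forall>j<n. 0 \<le> int r ^ n * x j + cone_weight n t x * (int r - 1) * int r ^ j"
  shows "\<exists>mu. (\<forall>i\<le>n. 0 \<le> mu i) \<and> (\<Sum>i\<le>n. mu i) = real t \<and>
           (\<forall>j<n. real_of_int (x j) = (\<Sum>i\<le>n. mu i * base_vert r n i j))"
proof -
  let ?w = "cone_weight n t x"
  have pos: "0 < real r ^ n"
    using r by simp
  define mu where "mu i = (if i = 0 then real_of_int ?w / real r ^ n
                           else real_of_int (x (i - 1))
                                + real_of_int ?w / real r ^ n * ((real r - 1) * real r ^ (i - 1)))"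
    for i
  have coords: "\<forall>j<n. real_of_int (x j) = (\<Sum>i\<le>n. mu i * base_vert r n i j)"
    by (simp add: base_vert_combination mu_def)
  have "0 \<le> mu i" if "i \<le> n" for i
  proof (cases i)
    case 0
    then show ?thesis
      using weight pos by (simp add: mu_def)
  next
    case (Suc j)
    have "0 \<le> real_of_int (int r ^ n * x j + ?w * (int r - 1) * int r ^ j)"
      using constraints that Suc by (simp only: of_int_0_le_iff)
    also have "\<dots> = real r ^ n * mu i"
      using pos Suc by (simp add: mu_def field_simps)
    finally show ?thesis
      using pos by (simp add: zero_le_mult_iff)
  qed
  moreover have "(\<Sum>i\<le>n. mu i) = real t"
  proof -
    have "(\<Sum>i\<le>n. mu i) = (\<Sum>j<n. \<Sum>i\<le>n. mu i * base_vert r n i j) + mu 0 * real r ^ n"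
      using base_vert_weight[of mu n r] by simp
    also have "(\<Sum>j<n. \<Sum>i\<le>n. mu i * base_vert r n i j) = (\<Sum>j<n. real_of_int (x j))"
      using coords by simp
    also have "mu 0 * real r ^ n = real_of_int ?w"
      using pos by (simp add: mu_def)
    finally show ?thesis
      by (simp add: cone_weight_def)
  qed
  ultimately show ?thesis
    using coords by blast
qed

text \<open>The lattice points of \<open>t \<B>\<^sub>(\<^sub>r\<^sub>,\<^sub>n\<^sub>)\<close>: the constraints say \<open>\<mu>\<^sub>0 \<ge> 0\<close> and
  \<open>r ^ n \<mu>\<^sub>j\<^sub>+\<^sub>1 \<ge> 0\<close>.\<close>
definition dilated_points :: "nat \<Rightarrow> nat \<Rightarrow> nat \<Rightarrow> (nat \<Rightarrow> int) set" where
  "dilated_points r n t = {x. (\<forall>j\<ge>n. x j = 0) \<and> 0 \<le> cone_weight n t x \<and>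
     (\<forall>j<n. 0 \<le> int r ^ n * x j + cone_weight n t x * (int r - 1) * int r ^ j)}"

lemma ehrhart_count_base_simplex:
  assumes "1 \<le> r"
  shows "ehrhart_count n n (base_vert r n) t = card (dilated_points r n t)"
proof -
  have "(\<exists>mu. (\<forall>i\<le>n. 0 \<le> mu i) \<and> (\<Sum>i\<le>n. mu i) = real t \<and>
           (\<forall>j<n. real_of_int (x j) = (\<Sum>i\<le>n. mu i * base_vert r n i j)))
        \<longleftrightarrow> 0 \<le> cone_weight n t x \<and>
           (\<forall>j<n. 0 \<le> int r ^ n * x j + cone_weight n t x * (int r - 1) * int r ^ j)" for x
    using dilated_base_simplex_constraints[OF assms] dilated_base_simplex_coeffs[OF assms] by blast
  then show ?thesis
    unfolding ehrhart_count_def dilated_points_def by simp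
qed

lemma int_box_height:
  assumes "1 \<le> r"
  shows "int (box_height r n b) = int b - (\<Sum>j<n. int (box_quot r n b j))"
  using box_quot_sum_le[OF assms, of n b] by (simp add: box_height_def of_nat_diff)

lemma sum_list_length_Suc:
  fixes ks :: "'a::comm_monoid_add list"
  assumes "length ks = Suc n"
  shows "sum_list ks = ks ! 0 + (\<Sum>j<n. ks ! Suc j)"
  using assms
  by (simp add: sum_list_sum_nth atLeast0LessThan sum.lessThan_Suc_shift del: sum.lessThan_Suc)

text \<open>The lattice point \<open>box_point r n b + \<Sum>i. k\<^sub>i (v\<^sup>(\<^sup>i\<^sup>), 1)\<close> of the cone over \<open>\<B>\<^sub>(\<^sub>r\<^sub>,\<^sub>n\<^sub>)\<close>,
  with its last coordinate dropped.\<close>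
definition cone_point :: "nat \<Rightarrow> nat \<Rightarrow> nat \<Rightarrow> nat list \<Rightarrow> nat \<Rightarrow> int" where
  "cone_point r n b ks j =
     (if j < n then int (ks ! Suc j) - int (ks ! 0) * (int r - 1) * int r ^ j - int (box_quot r n b j)
      else 0)"

definition cone_decomps :: "nat \<Rightarrow> nat \<Rightarrow> nat \<Rightarrow> (nat \<times> nat list) set" where
  "cone_decomps r n t =
     (SIGMA b:{..<r ^ n}. {ks. length ks = Suc n \<and> sum_list ks + box_height r n b = t})"

lemma cone_weight_cone_point:
  assumes r: "1 \<le> r" and ks: "length ks = Suc n" and t: "sum_list ks + box_height r n b = t"
  shows "cone_weight n t (cone_point r n b ks) = int (ks ! 0) * int r ^ n + int b"
proof -
  have "(\<Sum>j<n. cone_point r n b ks j)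
      = (\<Sum>j<n. int (ks ! Suc j)) - int (ks ! 0) * (\<Sum>j<n. (int r - 1) * int r ^ j)
        - (\<Sum>j<n. int (box_quot r n b j))"
    by (simp add: cone_point_def sum_subtractf sum_distrib_left mult.assoc)
  also have "(\<Sum>j<n. (int r - 1) * int r ^ j) = int r ^ n - 1"
    by (rule sum_pred_times_power)
  finally have "(\<Sum>j<n. cone_point r n b ks j)
      = (\<Sum>j<n. int (ks ! Suc j)) - int (ks ! 0) * (int r ^ n - 1) - (\<Sum>j<n. int (box_quot r n b j))" .
  moreover have "int t = int (sum_list ks) + int (box_height r n b)"
    using t by simp
  then have "int t = int (ks ! 0) + (\<Sum>j<n. int (ks ! Suc j)) + int b - (\<Sum>j<n. int (box_quot r n b j))"
    by (simp add: sum_list_length_Suc[OF ks] int_box_height[OF r])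
  ultimately show ?thesis
    by (simp add: cone_weight_def algebra_simps)
qed

lemma cone_point_constraint:
  assumes r: "1 \<le> r" and j: "j < n"
  shows "int r ^ n * cone_point r n b ks j + (int (ks ! 0) * int r ^ n + int b) * (int r - 1) * int r ^ j
           = int r ^ n * int (ks ! Suc j) + int (box_rem r n b j)"
  using j box_quot_rem[OF r, of b j n, where 'a = int] by (simp add: cone_point_def algebra_simps)

lemma cone_point_mem_dilated_points:
  assumes r: "1 \<le> r" and d: "(b, ks) \<in> cone_decomps r n t"
  shows "cone_point r n b ks \<in> dilated_points r n t"
proof -
  have ks: "length ks = Suc n" and t: "sum_list ks + box_height r n b = t"
    using d by (auto simp: cone_decomps_def)
  have "0 \<le> int r ^ n * cone_point r n b ks j + cone_weight n t (cone_point r n b ks) * (int r - 1) * int r ^ j"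
    if "j < n" for j
    using cone_point_constraint[OF r that, of b ks] by (simp add: cone_weight_cone_point[OF r ks t])
  then show ?thesis
    by (simp add: dilated_points_def cone_point_def cone_weight_cone_point[OF r ks t])
qed

lemma inj_on_cone_point:
  assumes r: "1 \<le> r"
  shows "inj_on (\<lambda>(b, ks). cone_point r n b ks) (cone_decomps r n t)"
proof (rule inj_onI, clarify)
  fix b ks b' ks'
  assume d: "(b, ks) \<in> cone_decomps r n t" and d': "(b', ks') \<in> cone_decomps r n t"
    and eq: "cone_point r n b ks = cone_point r n b' ks'"
  have ks: "length ks = Suc n" "sum_list ks + box_height r n b = t" "b < r ^ n"
    using d by (auto simp: cone_decomps_def)
  have ks': "length ks' = Suc n" "sum_list ks' + box_height r n b' = t" "b' < r ^ n"
    using d' by (auto simp: cone_decomps_def)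
  have "int (ks ! 0 * r ^ n + b) = int (ks' ! 0 * r ^ n + b')"
    using cone_weight_cone_point[OF r ks(1,2)] cone_weight_cone_point[OF r ks'(1,2)] eq by simp
  then have weights: "ks ! 0 * r ^ n + b = ks' ! 0 * r ^ n + b'"
    by (simp only: of_nat_eq_iff)
  have "b = (ks ! 0 * r ^ n + b) mod r ^ n" "b' = (ks' ! 0 * r ^ n + b') mod r ^ n"
    using ks(3) ks'(3) by simp_all
  then have "b = b'"
    by (simp only: weights)
  with weights r have k0: "ks ! 0 = ks' ! 0"
    by simp
  have "ks = ks'"
  proof (rule nth_equalityI)
    fix i
    assume "i < length ks"
    then show "ks ! i = ks' ! i"
      using k0 ks(1) fun_cong[OF eq, of "i - 1"] \<open>b = b'\<close>
      by (cases i) (auto simp: cone_point_def)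
  qed (simp add: ks ks')
  with \<open>b = b'\<close> show "b = b' \<and> ks = ks'"
    by blast
qed

lemma cone_multiplier_nonneg:
  assumes r: "1 \<le> r"
    and "0 \<le> int r ^ n * y + (int k * int r ^ n + int b) * (int r - 1) * int r ^ j"
  shows "0 \<le> y + int k * (int r - 1) * int r ^ j + int (box_quot r n b j)"
proof -
  let ?e = "y + int k * (int r - 1) * int r ^ j + int (box_quot r n b j)"
  have "int r ^ n * y + (int k * int r ^ n + int b) * (int r - 1) * int r ^ j
          = int r ^ n * ?e + int (box_rem r n b j)"
    using box_quot_rem[OF r, of b j n, where 'a = int] by (simp add: algebra_simps)
  with assms(2) have "0 \<le> int r ^ n * ?e + int (box_rem r n b j)"
    by simp
  moreover have "int (box_rem r n b j) < int r ^ n"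
    by (metis box_rem_less[OF r] of_nat_less_iff of_nat_power)
  moreover have "int r ^ n * (?e + 1) = int r ^ n * ?e + int r ^ n"
    by (simp add: algebra_simps)
  ultimately have "0 < int r ^ n * (?e + 1)"
    by linarith
  then show ?thesis
    by (simp add: zero_less_mult_iff)
qed

text \<open>A point \<open>x\<close> determines \<open>b\<close> and \<open>k\<^sub>0\<close> as remainder and quotient of its cone weight
  by \<open>r ^ n\<close>; the remaining multipliers are then forced, and nonnegative by the constraints.\<close>
lemma dilated_point_decomp:
  assumes r: "1 \<le> r" and x: "x \<in> dilated_points r n t"
  obtains b ks where "(b, ks) \<in> cone_decomps r n t" "x = cone_point r n b ks"
proof -
  define w where "w = cone_weight n t x"
  define b where "b = nat w mod r ^ n"
  define k0 where "k0 = nat w div r ^ n"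
  define e where "e j = x j + int k0 * (int r - 1) * int r ^ j + int (box_quot r n b j)" for j
  define ks where "ks = k0 # map (\<lambda>j. nat (e j)) [0..<n]"
  have support: "\<forall>j\<ge>n. x j = 0" and "0 \<le> w"
    and constraint: "\<forall>j<n. 0 \<le> int r ^ n * x j + w * (int r - 1) * int r ^ j"
    using x by (simp_all add: dilated_points_def w_def)
  then have w: "w = int k0 * int r ^ n + int b"
    unfolding b_def k0_def by (metis div_mult_mod_eq nat_0_le of_nat_add of_nat_mult of_nat_power)
  have b: "b < r ^ n"
    using r by (simp add: b_def)
  have "0 \<le> e j" if "j < n" for j
    using cone_multiplier_nonneg[OF r] constraint that by (simp add: e_def flip: w)
  then have x_eq: "x = cone_point r n b ks"
    using support by (auto simp: cone_point_def ks_def e_def nth_Cons')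
  moreover have ks_len: "length ks = Suc n"
    by (simp add: ks_def)
  moreover have "sum_list ks + box_height r n b = t"
  proof -
    have "cone_weight n (sum_list ks + box_height r n b) (cone_point r n b ks) = int (ks ! 0) * int r ^ n + int b"
      by (rule cone_weight_cone_point[OF r ks_len]) simp
    moreover have "ks ! 0 = k0"
      by (simp add: ks_def)
    ultimately have "cone_weight n (sum_list ks + box_height r n b) x = cone_weight n t x"
      using w by (simp flip: w_def x_eq)
    then show ?thesis
      by (simp add: cone_weight_def)
  qed
  ultimately show thesis
    using that b by (simp add: cone_decomps_def)
qed

lemma bij_betw_cone_point:
  assumes "1 \<le> r"
  shows "bij_betw (\<lambda>(b, ks). cone_point r n b ks) (cone_decomps r n t) (dilated_points r n t)"
  unfolding bij_betw_def
proof
  show "inj_on (\<lambda>(b, ks). cone_point r n b ks) (cone_decomps r n t)"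
    by (rule inj_on_cone_point[OF assms])
  show "(\<lambda>(b, ks). cone_point r n b ks) ` cone_decomps r n t = dilated_points r n t"
  proof
    show "(\<lambda>(b, ks). cone_point r n b ks) ` cone_decomps r n t \<subseteq> dilated_points r n t"
      using cone_point_mem_dilated_points[OF assms] by auto
    show "dilated_points r n t \<subseteq> (\<lambda>(b, ks). cone_point r n b ks) ` cone_decomps r n t"
    proof
      fix x
      assume "x \<in> dilated_points r n t"
      then obtain b ks where "(b, ks) \<in> cone_decomps r n t" "x = cone_point r n b ks"
        by (rule dilated_point_decomp[OF assms])
      then show "x \<in> (\<lambda>(b, ks). cone_point r n b ks) ` cone_decomps r n t"
        by force
    qed
  qed
qed

lemma card_lists_sum_list_plus:
  "card {ks :: nat list. length ks = Suc n \<and> sum_list ks + h = t}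
     = (if h \<le> t then (t - h + n) choose (t - h) else 0)"
proof (cases "h \<le> t")
  case True
  then have "{ks :: nat list. length ks = Suc n \<and> sum_list ks + h = t}
      = {ks. length ks = Suc n \<and> sum_list ks = t - h}"
    by auto
  with True show ?thesis
    by (simp add: card_length_sum_list)
next
  case False
  then have "{ks :: nat list. length ks = Suc n \<and> sum_list ks + h = t} = {}"
    by auto
  with False show ?thesis
    by simp
qed

lemma finite_lists_sum_list_plus:
  "finite {ks :: nat list. length ks = Suc n \<and> sum_list ks + h = t}"
proof (cases "h \<le> t")
  case True
  then show ?thesis
    using card_lists_sum_list_plus[of n h t] by (intro card_ge_0_finite) simp
next
  case False
  then show ?thesis
    by (simp add: not_le)
qed

lemma ehrhart_count_base_simplex_eq:
  assumes "1 \<le> r"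
  shows "ehrhart_count n n (base_vert r n) t
           = (\<Sum>b<r ^ n. if box_height r n b \<le> t
                          then (t - box_height r n b + n) choose (t - box_height r n b) else 0)"
proof -
  have "ehrhart_count n n (base_vert r n) t = card (cone_decomps r n t)"
    using ehrhart_count_base_simplex[OF assms] bij_betw_same_card[OF bij_betw_cone_point[OF assms]]
    by simp
  then show ?thesis
    by (simp add: cone_decomps_def finite_lists_sum_list_plus card_lists_sum_list_plus)
qed

lemma binomial_series_step:
  "Abs_fps (\<lambda>t. of_nat ((t + Suc n) choose t)) * (1 - fps_X)
     = (Abs_fps (\<lambda>t. of_nat ((t + n) choose t)) :: 'a::comm_ring_1 fps)"
proof (rule fps_ext)
  fix k
  show "fps_nth (Abs_fps (\<lambda>t. of_nat ((t + Suc n) choose t)) * (1 - fps_X)) k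
          = fps_nth (Abs_fps (\<lambda>t. of_nat ((t + n) choose t)) :: 'a fps) k"
    by (cases k) (simp_all add: algebra_simps fps_X_mult_nth)
qed

lemma binomial_series_times_power:
  "Abs_fps (\<lambda>t. of_nat ((t + n) choose t)) * (1 - fps_X) ^ Suc n = (1 :: 'a::comm_ring_1 fps)"
proof (induction n)
  case 0
  show ?case
    by (rule fps_ext) (simp add: algebra_simps fps_X_mult_nth)
next
  case (Suc n)
  then show ?case
    by (simp only: power_Suc[of _ "Suc n"] mult.assoc[symmetric] binomial_series_step)
qed

lemma h_star_base_simplex:
  assumes "1 \<le> r"
  shows "h_star n n (base_vert r n) = (\<Sum>b<r ^ n. fps_X ^ box_height r n b)"
proof -
  let ?binom = "Abs_fps (\<lambda>t. of_nat ((t + n) choose t)) :: int fps"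
  have count: "Abs_fps (\<lambda>t. int (ehrhart_count n n (base_vert r n) t))
          = (\<Sum>b<r ^ n. fps_X ^ box_height r n b) * ?binom"
  proof (rule fps_ext)
    fix t
    show "fps_nth (Abs_fps (\<lambda>t. int (ehrhart_count n n (base_vert r n) t))) t
            = fps_nth ((\<Sum>b<r ^ n. fps_X ^ box_height r n b) * ?binom) t"
      by (auto simp: ehrhart_count_base_simplex_eq[OF assms] sum_distrib_right fps_sum_nth
          fps_X_power_mult_nth of_nat_sum if_distrib intro!: sum.cong)
  qed
  show ?thesis
    unfolding h_star_def count mult.assoc Suc_eq_plus1[symmetric] binomial_series_times_power by simp
qed

lemma sum_fps_X_power_nth:
  assumes "finite A"
  shows "fps_nth (\<Sum>b\<in>A. fps_X ^ f b :: int fps) k = int (card {b \<in> A. f b = k})"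
  using assms by (simp add: fps_sum_nth of_bool_def flip: sum.inter_filter) (simp add: eq_commute)

lemma h_star_base_simplex_nth:
  assumes "1 \<le> r"
  shows "fps_nth (h_star n n (base_vert r n)) k = int (card {b. b < r ^ n \<and> box_height r n b = k})"
  using sum_fps_X_power_nth[of "{..<r ^ n}" "box_height r n" k]
  by (simp add: h_star_base_simplex[OF assms])

lemma box_quot_times_base:
  assumes "1 \<le> r"
  shows "box_quot r (Suc m) (r * b) j = box_quot r m b j"
proof -
  have "r * b * (r - 1) * r ^ j = r * (b * (r - 1) * r ^ j)"
    by (simp add: mult_ac)
  with assms show ?thesis
    by (simp add: box_quot_def mult.assoc)
qed

lemma box_quot_last:
  assumes "1 \<le> r"
  shows "box_quot r m b m = b * (r - 1)"
  using assms by (simp add: box_quot_def)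

lemma box_height_times_base:
  assumes "1 \<le> r"
  shows "box_height r (Suc m) (r * b) = box_height r m b"
proof -
  have "int (box_height r (Suc m) (r * b))
      = int (r * b) - int (b * (r - 1)) - (\<Sum>j<m. int (box_quot r m b j))"
    by (simp add: int_box_height[OF assms] box_quot_times_base[OF assms] box_quot_last[OF assms])
  also have "int (r * b) - int (b * (r - 1)) = int b"
    using assms by (simp add: of_nat_diff algebra_simps)
  also have "int b - (\<Sum>j<m. int (box_quot r m b j)) = int (box_height r m b)"
    by (simp add: int_box_height[OF assms])
  finally show ?thesis
    by simp
qed

lemma card_box_height_multiples:
  assumes "1 \<le> r"
  shows "card {b. b < r ^ Suc m \<and> r dvd b \<and> box_height r (Suc m) b = k}
           = card {b. b < r ^ m \<and> box_height r m b = k}"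
proof -
  have "{b. b < r ^ Suc m \<and> r dvd b \<and> box_height r (Suc m) b = k}
          = (\<lambda>c. r * c) ` {c. c < r ^ m \<and> box_height r m c = k}"
    using assms by (auto simp: box_height_times_base elim!: dvdE)
  moreover have "inj (\<lambda>c. r * c)"
    using assms by (auto intro: injI)
  ultimately show ?thesis
    by (simp add: card_image inj_on_subset)
qed

lemma card_box_height_split:
  assumes r: "1 \<le> r" and n: "1 \<le> n"
  shows "card {b. b < r ^ n \<and> box_height r n b = k}
           = card {b. b < r ^ (n - 1) \<and> box_height r (n - 1) b = k}
             + card {b. b < r ^ n \<and> \<not> r dvd b \<and> box_height r n b = k}"
proof -
  have "{b. b < r ^ n \<and> box_height r n b = k}
          = {b. b < r ^ n \<and> r dvd b \<and> box_height r n b = k}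
            \<union> {b. b < r ^ n \<and> \<not> r dvd b \<and> box_height r n b = k}"
    by blast
  moreover have "card {b. b < r ^ n \<and> r dvd b \<and> box_height r n b = k}
                   = card {b. b < r ^ (n - 1) \<and> box_height r (n - 1) b = k}"
    using card_box_height_multiples[OF r, of "n - 1" k] n by simp
  ultimately show ?thesis
    by (simp add: card_Un_disjoint disjoint_iff)
qed

theorem mainTheorem6:
  fixes r n :: nat
  assumes "r \<ge> 2" and "n \<ge> 2"
  shows "(\<forall>b::nat. 0 < b \<and> b < r ^ n \<longrightarrow>
            base_hp_points r n b \<noteq> {} \<and>
            (\<forall>y \<in> base_hp_points r n b.
               (y \<in> open_par n n (base_vert r n) \<longleftrightarrow> \<not> r dvd b)))
       \<and> lstar n n (base_vert r n) =
           h_star n n (base_vert r n) - h_star (n - 1) (n - 1) (base_vert r (n - 1))"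
proof
  have r: "1 \<le> r" and n: "1 \<le> n"
    using assms by simp_all
  show "\<forall>b::nat. 0 < b \<and> b < r ^ n \<longrightarrow> base_hp_points r n b \<noteq> {} \<and>
          (\<forall>y \<in> base_hp_points r n b. (y \<in> open_par n n (base_vert r n) \<longleftrightarrow> \<not> r dvd b))"
    using base_hp_points_eq[OF r] box_point_in_open_par_iff_not_dvd[OF r n] by simp
  show "lstar n n (base_vert r n) = h_star n n (base_vert r n) - h_star (n - 1) (n - 1) (base_vert r (n - 1))"
  proof (rule fps_ext)
    fix k
    show "fps_nth (lstar n n (base_vert r n)) k
            = fps_nth (h_star n n (base_vert r n) - h_star (n - 1) (n - 1) (base_vert r (n - 1))) k"
      using card_box_height_split[OF r n, of k]
      by (simp add: lstar_base_simplex_nth[OF r n] h_star_base_simplex_nth[OF r])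
  qed
qed

end
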